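(* Let $N,d\ge 1$ and let $\mathcal{U}=\{[\mathbf{x},\mathbf{h}]\in\mathbb{R}^{N\times(3+d)}:\ \tfrac1N\sum_{i=1}^N\mathbf{x}^{(i)}=0\}$, where $\mathbf{x}=(\mathbf{x}^{(1)},\dots,\mathbf{x}^{(N)})\in\mathbb{R}^{N\times 3}$ and $\mathbf{h}\in\mathbb{R}^{N\times d}$. Let $\mathrm{O}(3)$ act on $\mathcal{U}$ by $R\cdot[\mathbf{x},\mathbf{h}]=[R\mathbf{x}^{(1)},\dots,R\mathbf{x}^{(N)},\mathbf{h}]$, and let $\lambda$ be the Haar probability measure on $\mathrm{O}(3)$. Let $q(\mathbf{z}_0)$ be a probability distribution on $\mathcal{U}$, let $\alpha_t,\sigma_t>0$ and $w(t)\ge 0$ be constants, and let $\epsilon_\theta:\mathcal{U}\to\mathcal{U}$ be a measurable function. Let $\mathcal{N}_\mathcal{U}(0,\mathbf{I})$ be the distribution of $\mathrm{proj}_\mathcal{U}(\epsilon)$ with $\epsilon\sim\mathcal{N}(0,\mathbf{I})$ on $\mathbb{R}^{N\times(3+d)}$, where $\mathrm{proj}_\mathcal{U}([\mathbf{x},\mathbf{h}])=[\mathbf{x}-(\bar{\mathbf{x}},\dots,\bar{\mathbf{x}}),\mathbf{h}]$ with $\bar{\mathbf{x}}=\tfrac1N\sum_i\mathbf{x}^{(i)}$. Let $\gamma_\theta:\mathcal{U}\to\mathrm{O}(3)$ be a Markov kernel and define $$\mathcal{L}_t=\mathbb{E}_{\mathbf{z}_0\sim q,\ \epsilon\sim\mathcal{N}_\mathcal{U}(0,\mathbf{I}),\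 R\sim\gamma_\theta(dR\mid\mathbf{z}_t)}\Big[\tfrac12 w(t)\big\|\epsilon-R\cdot\epsilon_\theta(R^{T}\cdot\mathbf{z}_t)\big\|^2\Big],\quad \mathbf{z}_t=\alpha_t\mathbf{z}_0+\sigma_t\epsilon,$$ $$\mathcal{L}_t^{\mathrm{aug}}=\mathbb{E}_{\mathbf{z}_0\sim q,\ \epsilon\sim\mathcal{N}_\mathcal{U}(0,\mathbf{I}),\ R\sim\lambda}\Big[\tfrac12 w(t)\big\|\epsilon-\epsilon_\theta(\alpha_t R\cdot\mathbf{z}_0+\sigma_t\epsilon)\big\|^2\Big],$$ with $\mathbf{z}_0,\epsilon$ independent (and $R$ independent of them in $\mathcal{L}_t^{\mathrm{aug}}$). If $\gamma_\theta(dR\mid\mathbf{z})=\lambda(dR)$ for all $\mathbf{z}\in\mathcal{U}$, then $\mathcal{L}_t=\mathcal{L}_t^{\mathrm{aug}}$.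
   Context: $\|\cdot\|$ denotes the Euclidean (Frobenius) norm on $\mathbb{R}^{N\times(3+d)}$. $\mathrm{O}(3)$ is the group of orthogonal $3\times3$ real matrices. A Markov kernel $\gamma_\theta:\mathcal{U}\to\mathrm{O}(3)$ assigns to each $\mathbf{z}\in\mathcal{U}$ a probability distribution on $\mathrm{O}(3)$. *)

theory Defs
  imports "HOL-Probability.Probability"
begin

text \<open>Points of R^{N x (3+d)}: the N rows x^(i) in R^3 together with h in R^{N x d}.
  N = CARD('n), d = CARD('d). The norm of the product type is the Frobenius norm.\<close>
type_synonym ('n, 'd) pt = "((real^3)^'n) \<times> ((real^'d)^'n)"

definition Uspace :: "('n::finite, 'd::finite) pt set" where
  "Uspace = {(x, h). (1 / real CARD('n)) *\<^sub>R (\<Sum>i\<in>UNIV. x $ i) = 0}"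

definition projU :: "('n::finite, 'd::finite) pt \<Rightarrow> ('n, 'd) pt" where
  "projU z = (let xbar = (1 / real CARD('n)) *\<^sub>R (\<Sum>i\<in>UNIV. fst z $ i)
              in ((\<chi> i. fst z $ i - xbar), snd z))"

definition O3 :: "(real^3^3) set" where
  "O3 = {R. orthogonal_matrix R}"

definition act :: "real^3^3 \<Rightarrow> ('n::finite, 'd::finite) pt \<Rightarrow> ('n, 'd) pt" where
  "act R z = ((\<chi> i. R *v (fst z $ i)), snd z)"

definition std_gauss :: "('a::euclidean_space) measure" where
  "std_gauss = density lborel
     (\<lambda>x. ennreal ((2 * pi) powr (- real DIM('a) / 2) * exp (- (norm x)\<^sup>2 / 2)))"

definition gaussU :: "('n::finite, 'd::finite) pt measure" where
  "gaussU = distr std_gauss borel projU"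

text \<open>Haar probability measure on O(3): a probability measure on the Borel sets of
  3x3 matrices, concentrated on O(3), invariant under left translation by O(3).
  (Such a measure is unique.)\<close>
definition is_haar_O3 :: "(real^3^3) measure \<Rightarrow> bool" where
  "is_haar_O3 lam \<longleftrightarrow> prob_space lam \<and> sets lam = sets borel \<and> emeasure lam O3 = 1 \<and>
     (\<forall>R\<in>O3. distr lam borel (\<lambda>A. R ** A) = lam)"

definition loss_t ::
  "('n::finite, 'd::finite) pt measure \<Rightarrow> real \<Rightarrow> real \<Rightarrow> real \<Rightarrow>
   (('n, 'd) pt \<Rightarrow> ('n, 'd) pt) \<Rightarrow> (('n, 'd) pt \<Rightarrow> (real^3^3) measure) \<Rightarrow> ennreal" where
  "loss_t q a s w epsth gam =
     (\<integral>\<^sup>+ z0. \<integral>\<^sup>+ e. (let zt = a *\<^sub>R z0 + s *\<^sub>R e in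
        \<integral>\<^sup>+ R. ennreal (1/2 * w * (norm (e - act R (epsth (act (transpose R) zt))))\<^sup>2) \<partial>gam zt)
      \<partial>gaussU \<partial>q)"

definition loss_aug ::
  "('n::finite, 'd::finite) pt measure \<Rightarrow> real \<Rightarrow> real \<Rightarrow> real \<Rightarrow>
   (('n, 'd) pt \<Rightarrow> ('n, 'd) pt) \<Rightarrow> (real^3^3) measure \<Rightarrow> ennreal" where
  "loss_aug q a s w epsth lam =
     (\<integral>\<^sup>+ z0. \<integral>\<^sup>+ e. \<integral>\<^sup>+ R.
        ennreal (1/2 * w * (norm (e - epsth (a *\<^sub>R act R z0 + s *\<^sub>R e)))\<^sup>2) \<partial>lam \<partial>gaussU \<partial>q)"

end

theory Submission
  imports Defs
begin

(* For z0 in U the noise e ~ N_U(0,I) lies in U almost surely, hence so does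
   z_t = a z0 + s e, and gamma(. | z_t) is the Haar measure lambda.  For orthogonal R,
   |e - R eps(R^T z_t)| = |R^T e - eps(a R^T z0 + s R^T e)|.  After exchanging the e- and
   R-integrals, the substitution e := R^T e leaves N_U(0,I) invariant (the Gaussian density
   is radial, Lebesgue measure is invariant under orthogonal maps, and the O(3) action
   commutes with proj_U), and R := R^T leaves lambda invariant, which yields L_aug. *)

section \<open>Coordinates of a Euclidean space\<close>

(* The library proves invariance of Lebesgue measure under orthogonal maps only on
   real^'n with 'n finite and well-ordered; indexing coordinates by the basis vectors
   transfers it to an arbitrary Euclidean space. *)
typedef (overloaded) ('a::euclidean_space) basis_index = "Basis :: 'a set"
  morphisms basis_vector Abs_basis_index
  using nonempty_Basis by blast

lemma range_basis_vector: "range basis_vector = Basis"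
  by (rule type_definition.Rep_range[OF type_definition_basis_index])

lemma bij_basis_vector: "bij_betw basis_vector UNIV (Basis :: 'a::euclidean_space set)"
  by (simp add: bij_betw_def inj_def basis_vector_inject range_basis_vector)

instance basis_index :: (euclidean_space) finite
proof
  show "finite (UNIV :: 'a basis_index set)"
    using bij_basis_vector[where 'a='a] by (simp add: bij_betw_finite)
qed

definition basis_rank :: "'a::euclidean_space basis_index \<Rightarrow> nat" where
  "basis_rank i = to_nat_on Basis (basis_vector i)"

lemma inj_basis_rank: "inj basis_rank"
proof -
  have "inj (to_nat_on Basis \<circ> basis_vector :: 'a basis_index \<Rightarrow> nat)"
    by (rule comp_inj_on)
       (simp_all add: inj_def basis_vector_inject range_basis_vector inj_on_to_nat_on countable_finite)
  then show ?thesis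
    by (simp add: basis_rank_def[abs_def] comp_def)
qed

instantiation basis_index :: (euclidean_space) wellorder
begin

definition less_eq_basis_index :: "'a basis_index \<Rightarrow> 'a basis_index \<Rightarrow> bool" where
  "i \<le> j \<longleftrightarrow> basis_rank i \<le> basis_rank j"

definition less_basis_index :: "'a basis_index \<Rightarrow> 'a basis_index \<Rightarrow> bool" where
  "i < j \<longleftrightarrow> basis_rank i < basis_rank j"

instance
proof
  fix i j k :: "'a basis_index" and P :: "'a basis_index \<Rightarrow> bool"
  show "i < j \<longleftrightarrow> i \<le> j \<and> \<not> j \<le> i"
    by (simp add: less_eq_basis_index_def less_basis_index_def less_le_not_le)
  show "i \<le> i"
    by (simp add: less_eq_basis_index_def)
  show "i \<le> j \<Longrightarrow> j \<le> k \<Longrightarrow> i \<le> k"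
    by (simp add: less_eq_basis_index_def)
  show "i = j" if "i \<le> j" "j \<le> i"
    using that by (intro injD[OF inj_basis_rank] le_antisym) (simp_all add: less_eq_basis_index_def)
  show "i \<le> j \<or> j \<le> i"
    by (simp add: less_eq_basis_index_def nat_le_linear)
  show "P i" if step: "\<And>i. (\<And>j. j < i \<Longrightarrow> P j) \<Longrightarrow> P i"
  proof (induction i rule: measure_induct_rule[of basis_rank])
    case (less i)
    show ?case
      by (rule step) (simp add: less.IH less_basis_index_def)
  qed
qed

end

definition coords :: "'a::euclidean_space \<Rightarrow> real^'a basis_index" where
  "coords x = (\<chi> i. x \<bullet> basis_vector i)"

definition from_coords :: "real^'a basis_index \<Rightarrow> 'a::euclidean_space" where
  "from_coords y = (\<Sum>i\<in>UNIV. y $ i *\<^sub>R basis_vector i)"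

lemma inner_from_coords_basis_vector: "from_coords y \<bullet> basis_vector i = y $ i"
proof -
  have "from_coords y \<bullet> basis_vector i = (\<Sum>j\<in>UNIV. if j = i then y $ i else 0)"
    unfolding from_coords_def inner_sum_left
    by (intro sum.cong) (auto simp: inner_not_same_Basis basis_vector basis_vector_inject)
  then show ?thesis
    by simp
qed

lemma coords_from_coords [simp]: "coords (from_coords y) = y"
  by (simp add: coords_def inner_from_coords_basis_vector vec_eq_iff)

lemma from_coords_coords [simp]: "from_coords (coords x) = x"
  using sum.reindex_bij_betw[OF bij_basis_vector, of "\<lambda>b. (x \<bullet> b) *\<^sub>R b"]
  by (simp add: from_coords_def coords_def euclidean_representation)

lemma inner_coords: "coords x \<bullet> coords y = x \<bullet> y"
proof -
  have "coords x \<bullet> coords y = (\<Sum>i\<in>UNIV. (x \<bullet> basis_vector i) * (y \<bullet> basis_vector i))"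
    by (simp add: coords_def inner_vec_def)
  also have "\<dots> = (\<Sum>b\<in>Basis. (x \<bullet> b) * (y \<bullet> b))"
    by (rule sum.reindex_bij_betw[OF bij_basis_vector])
  finally show ?thesis
    by (simp flip: euclidean_inner)
qed

lemma linear_coords: "linear coords"
  by (rule linearI) (simp_all add: coords_def vec_eq_iff inner_add_left)

lemma linear_from_coords: "linear from_coords"
  by (rule linearI) (simp_all add: from_coords_def scaleR_add_left sum.distrib scaleR_sum_right)

lemma borel_measurable_from_coords [measurable]: "from_coords \<in> borel_measurable borel"
  by (rule borel_measurable_continuous_onI)
     (simp add: linear_continuous_on linear_linear linear_from_coords)

lemma lborel_eq_distr_from_coords:
  "lborel = distr lborel borel (from_coords :: _ \<Rightarrow> 'a::euclidean_space)"
proof (rule lborel_eqI)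
  fix l u :: 'a
  assume le: "\<And>b. b \<in> Basis \<Longrightarrow> l \<bullet> b \<le> u \<bullet> b"
  have all_Basis: "(\<forall>b\<in>Basis. P b) \<longleftrightarrow> (\<forall>i. P (basis_vector i))" for P :: "'a \<Rightarrow> bool"
    unfolding range_basis_vector[symmetric] by blast
  have "from_coords y \<in> box l u \<longleftrightarrow> y \<in> box (coords l) (coords u)" for y
  proof -
    have "from_coords y \<in> box l u
        \<longleftrightarrow> (\<forall>i. l \<bullet> basis_vector i < y $ i \<and> y $ i < u \<bullet> basis_vector i)"
      by (simp add: mem_box all_Basis inner_from_coords_basis_vector)
    then show ?thesis
      by (simp add: mem_box_cart coords_def)
  qed
  then have "emeasure (distr lborel borel from_coords) (box l u)
      = emeasure lborel (box (coords l) (coords u))"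
    by (simp add: emeasure_distr vimage_def)
  also have "\<dots> = (\<Prod>b\<in>Basis. (coords u - coords l) \<bullet> b)"
    using le[OF basis_vector]
    by (intro emeasure_lborel_box) (auto simp: Basis_vec_def inner_axis coords_def)
  also have "\<dots> = (\<Prod>i\<in>UNIV. (coords u - coords l) $ i)"
    by (intro arg_cong[where f=ennreal] prod.reindex_cong[of "\<lambda>i. axis i 1"])
       (auto simp: inj_on_def axis_eq_axis Basis_vec_def inner_axis)
  also have "\<dots> = (\<Prod>i\<in>UNIV. (u - l) \<bullet> basis_vector i)"
    by (simp add: coords_def inner_diff_left)
  also have "\<dots> = (\<Prod>b\<in>Basis. (u - l) \<bullet> b)"
    by (intro arg_cong[where f=ennreal] prod.reindex_bij_betw[OF bij_basis_vector])
  finally show "emeasure (distr lborel borel from_coords) (box l u) = (\<Prod>b\<in>Basis. (u - l) \<bullet> b)" .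
qed simp

section \<open>Rotation invariance of Lebesgue and Gaussian measure\<close>

lemma borel_measurable_orthogonal_transformation:
  fixes f :: "'a::euclidean_space \<Rightarrow> 'a"
  assumes "orthogonal_transformation f"
  shows "f \<in> borel_measurable borel"
proof -
  have "bounded_linear f"
    using orthogonal_transformation_linear[OF assms] by (simp add: linear_linear)
  then show ?thesis
    by (intro borel_measurable_continuous_onI linear_continuous_on)
qed

lemma lborel_distr_orthogonal_cart:
  fixes L :: "real^'n::{finite,wellorder} \<Rightarrow> real^'n::_"
  assumes L: "orthogonal_transformation L"
  shows "distr lborel borel L = lborel"
proof (rule lborel_eqI[symmetric])
  fix l u :: "real^'n::_"
  assume le: "\<And>b. b \<in> Basis \<Longrightarrow> l \<bullet> b \<le> u \<bullet> b"
  have meas: "L \<in> borel_measurable borel"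
    using L by (rule borel_measurable_orthogonal_transformation)
  have inv: "orthogonal_transformation (inv L)"
    using L by (rule orthogonal_transformation_inv)
  have pre: "L -` box l u = inv L ` box l u"
    using orthogonal_transformation_bij[OF L] by (simp add: bij_vimage_eq_inv_image)
  have "L -` box l u \<in> sets borel"
    using measurable_sets_borel[OF meas] by simp
  then have "emeasure (distr lborel borel L) (box l u) = emeasure lebesgue (L -` box l u)"
    using meas by (simp add: emeasure_distr)
  also have "\<dots> = measure lebesgue (inv L ` box l u)"
    using measurable_orthogonal_image[OF inv] by (simp add: emeasure_eq_measure2 pre)
  also have "\<dots> = measure lebesgue (box l u)"
    using measure_orthogonal_image[OF inv] by simp
  also have "\<dots> = emeasure lborel (box l u)"
    by (simp add: emeasure_eq_measure2 emeasure_lborel_box_finite)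
  also have "\<dots> = (\<Prod>b\<in>Basis. (u - l) \<bullet> b)"
    using le by simp
  finally show "emeasure (distr lborel borel L) (box l u) = (\<Prod>b\<in>Basis. (u - l) \<bullet> b)" .
qed simp

theorem lborel_distr_orthogonal_transformation:
  fixes L :: "'a::euclidean_space \<Rightarrow> 'a"
  assumes L: "orthogonal_transformation L"
  shows "distr lborel borel L = lborel"
proof -
  define L' :: "real^'a basis_index \<Rightarrow> real^'a basis_index"
    where "L' = coords \<circ> L \<circ> from_coords"
  have "L' v \<bullet> L' w = v \<bullet> w" for v w
    using L unfolding orthogonal_transformation_def L'_def
    by (metis comp_apply inner_coords coords_from_coords)
  moreover have "linear L'"
    using orthogonal_transformation_linear[OF L] unfolding L'_def
    by (intro linear_compose linear_from_coords linear_coords)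
  ultimately have L': "orthogonal_transformation L'"
    by (simp add: orthogonal_transformation_def)
  have [measurable]: "L \<in> borel_measurable borel" "L' \<in> borel_measurable borel"
    using L L' by (simp_all add: borel_measurable_orthogonal_transformation)
  have "distr lborel borel L = distr (distr lborel borel from_coords) borel L"
    by (simp flip: lborel_eq_distr_from_coords)
  also have "\<dots> = distr lborel borel (from_coords \<circ> L')"
    by (simp add: distr_distr L'_def comp_def)
  also have "\<dots> = distr (distr lborel borel L') borel from_coords"
    by (simp add: distr_distr)
  also have "\<dots> = lborel"
    by (simp add: lborel_distr_orthogonal_cart[OF L'] flip: lborel_eq_distr_from_coords)
  finally show ?thesis .
qed

lemma std_gauss_density_eq_prod:
  fixes x :: "'a::euclidean_space"
  shows "ennreal ((2 * pi) powr (- real DIM('a) / 2) * exp (- (norm x)\<^sup>2 / 2))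
    = (\<Prod>b\<in>Basis. ennreal (std_normal_density (x \<bullet> b)))"
proof -
  have "(2 * pi) powr (- real DIM('a) / 2) = ((2 * pi) powr (- (1 / 2))) powr real DIM('a)"
    by (simp add: powr_powr)
  also have "\<dots> = (\<Prod>b\<in>(Basis :: 'a set). 1 / sqrt (2 * pi))"
    by (simp add: powr_realpow powr_minus_divide powr_half_sqrt)
  finally have const: "(2 * pi) powr (- real DIM('a) / 2) = (\<Prod>b\<in>(Basis :: 'a set). 1 / sqrt (2 * pi))" .
  have "(norm x)\<^sup>2 = (\<Sum>b\<in>Basis. (x \<bullet> b)\<^sup>2)"
    unfolding power2_norm_eq_inner euclidean_inner[of x x] by (simp add: power2_eq_square)
  then have "exp (- (norm x)\<^sup>2 / 2) = (\<Prod>b\<in>Basis. exp (- (x \<bullet> b)\<^sup>2 / 2))"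
    by (simp add: sum_divide_distrib sum_negf flip: exp_sum)
  with const have "(2 * pi) powr (- real DIM('a) / 2) * exp (- (norm x)\<^sup>2 / 2)
      = (\<Prod>b\<in>Basis. 1 / sqrt (2 * pi) * exp (- (x \<bullet> b)\<^sup>2 / 2))"
    by (simp only: prod.distrib)
  then show ?thesis
    by (simp add: std_normal_density_def prod_ennreal)
qed

lemma std_gauss_eq_density_prod:
  "std_gauss = density lborel (\<lambda>x::'a::euclidean_space. \<Prod>b\<in>Basis. ennreal (std_normal_density (x \<bullet> b)))"
  unfolding std_gauss_def std_gauss_density_eq_prod ..

lemma prob_space_std_gauss: "prob_space (std_gauss :: 'a::euclidean_space measure)"
proof
  have "emeasure (std_gauss :: 'a measure) UNIV
      = (\<integral>\<^sup>+x. (\<Prod>b\<in>Basis. ennreal (std_normal_density (x \<bullet> b))) \<partial>(lborel :: 'a measure))"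
    by (simp add: std_gauss_eq_density_prod emeasure_density)
  also have "\<dots> = (\<Prod>b\<in>(Basis :: 'a set). \<integral>\<^sup>+t. ennreal (std_normal_density t) \<partial>lborel)"
    by (rule nn_integral_lborel_prod) simp_all
  also have "\<dots> = 1"
    by (simp add: nn_integral_eq_integral)
  finally show "emeasure (std_gauss :: 'a measure) (space std_gauss) = 1"
    by (simp add: std_gauss_def)
qed

lemma std_gauss_distr_orthogonal:
  fixes T :: "'a::euclidean_space \<Rightarrow> 'a"
  assumes T: "orthogonal_transformation T"
  shows "distr std_gauss borel T = std_gauss"
proof -
  define g :: "'a \<Rightarrow> ennreal"
    where "g = (\<lambda>x. ennreal ((2 * pi) powr (- real DIM('a) / 2) * exp (- (norm x)\<^sup>2 / 2)))"
  have T': "orthogonal_transformation (inv T)"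
    using T by (rule orthogonal_transformation_inv)
  have "distr std_gauss borel T = distr (density (distr lborel borel (inv T)) g) lborel T"
    by (intro distr_cong)
       (simp_all add: std_gauss_def g_def lborel_distr_orthogonal_transformation[OF T'])
  also have "\<dots> = density lborel (g \<circ> inv T)"
    using orthogonal_transformation_bij[OF T]
      borel_measurable_orthogonal_transformation[OF T] borel_measurable_orthogonal_transformation[OF T']
    by (intro distr_density_distr) (simp_all add: g_def bij_is_surj surj_f_inv_f)
  also have "\<dots> = std_gauss"
    using T' by (simp add: std_gauss_def g_def comp_def orthogonal_transformation_norm)
  finally show ?thesis .
qed

section \<open>The action of O(3) on U and on the projected Gaussian\<close>

lemma subspace_Uspace: "subspace Uspace"
  by (auto simp: subspace_def Uspace_def zero_prod_def sum.distrib scaleR_add_right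
      simp flip: scaleR_sum_right)

lemma projU_in_Uspace: "projU z \<in> Uspace"
proof -
  have "(\<Sum>i\<in>UNIV. x $ i - (1 / real CARD('n)) *\<^sub>R (\<Sum>j\<in>UNIV. x $ j)) = 0"
    for x :: "(real^3)^'n::finite"
    by (simp add: sum_subtractf sum_constant_scaleR del: sum_constant)
  then show ?thesis
    by (simp add: projU_def Uspace_def Let_def case_prod_beta)
qed

lemma Uspace_borel: "Uspace \<in> sets (borel :: ('n::finite, 'd::finite) pt measure)"
proof -
  have "Uspace = (\<lambda>z::('n, 'd) pt. (1 / real CARD('n)) *\<^sub>R (\<Sum>i\<in>UNIV. fst z $ i)) -` {0}"
    by (auto simp: Uspace_def)
  also have "\<dots> \<in> sets borel"
    by (intro borel_closed closed_vimage closed_singleton) (intro continuous_intros)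
  finally show ?thesis .
qed

lemma linear_act: "linear (act R)"
  by (rule linearI)
     (simp_all add: act_def vec_eq_iff matrix_vector_right_distrib matrix_vector_mult_scaleR)

lemma act_act: "act A (act B z) = act (A ** B) z"
  by (simp add: act_def matrix_vector_mul_assoc)

lemma act_mat_1: "act (mat 1) z = z"
  by (simp add: act_def)

lemma O3_transpose: "R \<in> O3 \<Longrightarrow> transpose R \<in> O3"
  by (simp add: O3_def orthogonal_matrix_transpose)

lemma act_transpose_act: "R \<in> O3 \<Longrightarrow> act (transpose R) (act R z) = z"
  unfolding act_act by (simp add: O3_def orthogonal_matrix act_mat_1)

lemma orthogonal_transformation_act:
  assumes "R \<in> O3"
  shows "orthogonal_transformation (act R)"
proof -
  have "(R *v x) \<bullet> (R *v y) = x \<bullet> y" for x y :: "real^3"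
    using assms orthogonal_transformation_matrix[of "(*v) R"]
    by (simp add: O3_def orthogonal_transformation_def)
  then show ?thesis
    by (simp add: orthogonal_transformation_def linear_act act_def inner_prod_def inner_vec_def)
qed

lemma norm_diff_act:
  assumes "R \<in> O3"
  shows "norm (e - act R y) = norm (act (transpose R) e - y)"
proof -
  have "norm (e - act R y) = norm (act (transpose R) (e - act R y))"
    by (rule orthogonal_transformation_norm[symmetric])
       (rule orthogonal_transformation_act[OF O3_transpose[OF assms]])
  also have "\<dots> = norm (act (transpose R) e - y)"
    by (simp add: linear_diff[OF linear_act] act_transpose_act assms)
  finally show ?thesis .
qed

lemma act_projU: "act R (projU z) = projU (act R z)"
  by (simp add: act_def projU_def Let_def vec_eq_iff matrix_vector_mult_diff_distrib
      matrix_vector_mult_scaleR linear_sum[OF matrix_vector_mul_linear])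

lemma borel_measurable_act [measurable (raw)]:
  fixes f :: "'a \<Rightarrow> real^3^3" and g :: "'a \<Rightarrow> ('n::finite, 'd::finite) pt"
  assumes "f \<in> borel_measurable M" "g \<in> borel_measurable M"
  shows "(\<lambda>x. act (f x) (g x)) \<in> borel_measurable M"
  using assms by (rule borel_measurable_continuous_Pair)
    (unfold act_def matrix_vector_mult_def, intro continuous_intros)

lemma borel_measurable_matrix_mult [measurable (raw)]:
  fixes f g :: "'a \<Rightarrow> real^'n::finite^'n"
  assumes "f \<in> borel_measurable M" "g \<in> borel_measurable M"
  shows "(\<lambda>x. f x ** g x) \<in> borel_measurable M"
  using assms by (rule borel_measurable_continuous_Pair)
    (unfold matrix_matrix_mult_def, intro continuous_intros)

lemma borel_measurable_transpose [measurable]: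
  "(transpose :: real^'n::finite^'m::finite \<Rightarrow> _) \<in> borel_measurable borel"
  by (rule borel_measurable_continuous_onI) (unfold transpose_def, intro continuous_intros)

lemma borel_measurable_projU [measurable]: "projU \<in> borel_measurable borel"
  by (rule borel_measurable_continuous_onI) (unfold projU_def Let_def, intro continuous_intros)

lemma sets_gaussU [measurable_cong]: "sets gaussU = sets borel"
  by (simp add: gaussU_def)

lemma prob_space_gaussU: "prob_space gaussU"
  unfolding gaussU_def
  by (rule prob_space.prob_space_distr[OF prob_space_std_gauss]) (simp add: std_gauss_def)

lemma AE_gaussU_Uspace: "AE e in gaussU. e \<in> Uspace"
proof -
  have "projU \<in> std_gauss \<rightarrow>\<^sub>M borel"
    by (simp add: std_gauss_def)
  then show ?thesis
    unfolding gaussU_def using Uspace_borel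
    by (subst AE_distr_iff) (simp_all add: projU_in_Uspace)
qed

lemma gaussU_distr_act:
  assumes "R \<in> O3"
  shows "distr gaussU borel (act R) = gaussU"
proof -
  have [measurable]: "projU \<in> std_gauss \<rightarrow>\<^sub>M borel" "act R \<in> std_gauss \<rightarrow>\<^sub>M borel"
    by (simp_all add: std_gauss_def)
  have "distr gaussU borel (act R) = distr std_gauss borel (projU \<circ> act R)"
    by (simp add: gaussU_def distr_distr comp_def act_projU)
  also have "\<dots> = distr (distr std_gauss borel (act R)) borel projU"
    by (simp add: distr_distr)
  finally show ?thesis
    by (simp add: std_gauss_distr_orthogonal orthogonal_transformation_act assms gaussU_def)
qed

section \<open>Haar measure on O(3)\<close>

lemma nn_integral_fubini_borel:
  fixes f :: "'a::second_countable_topology \<Rightarrow> 'b::second_countable_topology \<Rightarrow> ennreal"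
  assumes "sigma_finite_measure M" "sets M = sets borel"
    and "sigma_finite_measure N" "sets N = sets borel"
    and f: "(\<lambda>(x, y). f x y) \<in> borel_measurable (borel \<Otimes>\<^sub>M borel)"
  shows "(\<integral>\<^sup>+x. \<integral>\<^sup>+y. f x y \<partial>N \<partial>M) = (\<integral>\<^sup>+y. \<integral>\<^sup>+x. f x y \<partial>M \<partial>N)"
proof -
  interpret pair_sigma_finite M N
    using assms by (simp add: pair_sigma_finite_def)
  have "(\<lambda>(x, y). f x y) \<in> borel_measurable (M \<Otimes>\<^sub>M N)"
    using f by (simp add: measurable_cong_sets[OF sets_pair_measure_cong[OF assms(2,4)] refl])
  then show ?thesis
    by (rule Fubini'[symmetric])
qed

lemma AE_haar_O3: "is_haar_O3 lam \<Longrightarrow> AE R in lam. R \<in> O3"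
  by (auto simp: is_haar_O3_def measure_def intro!: prob_space.AE_prob_1)

lemma nn_integral_haar_O3_mult_left:
  assumes H: "is_haar_O3 lam" and S: "S \<in> O3" and [measurable]: "h \<in> borel_measurable borel"
  shows "(\<integral>\<^sup>+R. h (S ** R) \<partial>lam) = (\<integral>\<^sup>+R. h R \<partial>lam)"
proof -
  have [measurable_cong]: "sets lam = sets borel"
    using H by (simp add: is_haar_O3_def)
  have "(\<integral>\<^sup>+R. h (S ** R) \<partial>lam) = (\<integral>\<^sup>+R. h R \<partial>distr lam borel (\<lambda>A. S ** A))"
    by (simp add: nn_integral_distr)
  also have "\<dots> = (\<integral>\<^sup>+R. h R \<partial>lam)"
    using H S by (simp add: is_haar_O3_def)
  finally show ?thesis .
qed

(* Inversion invariance from left invariance: integrate h (S^T R) over both variables,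
   once in each order. *)
lemma nn_integral_haar_O3_transpose:
  assumes H: "is_haar_O3 lam" and h [measurable]: "h \<in> borel_measurable borel"
  shows "(\<integral>\<^sup>+R. h (transpose R) \<partial>lam) = (\<integral>\<^sup>+R. h R \<partial>lam)"
proof -
  interpret lam: prob_space lam
    using H by (simp add: is_haar_O3_def)
  have sets_lam: "sets lam = sets borel"
    using H by (simp add: is_haar_O3_def)
  have left: "(\<integral>\<^sup>+S. \<integral>\<^sup>+R. g (transpose S ** R) \<partial>lam \<partial>lam) = (\<integral>\<^sup>+R. g R \<partial>lam)"
    if [measurable]: "g \<in> borel_measurable borel" for g :: "real^3^3 \<Rightarrow> ennreal"
  proof -
    have "(\<integral>\<^sup>+S. \<integral>\<^sup>+R. g (transpose S ** R) \<partial>lam \<partial>lam) = (\<integral>\<^sup>+S. \<integral>\<^sup>+R. g R \<partial>lam \<partial>lam)"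
      using AE_haar_O3[OF H]
      by (intro nn_integral_cong_AE)
         (auto elim!: eventually_mono simp: nn_integral_haar_O3_mult_left[OF H _ that] O3_transpose)
    then show ?thesis
      by (simp add: lam.emeasure_space_1)
  qed
  have "(\<integral>\<^sup>+R. h R \<partial>lam) = (\<integral>\<^sup>+S. \<integral>\<^sup>+R. h (transpose S ** R) \<partial>lam \<partial>lam)"
    by (rule left[symmetric]) measurable
  also have "\<dots> = (\<integral>\<^sup>+R. \<integral>\<^sup>+S. h (transpose (transpose R ** S)) \<partial>lam \<partial>lam)"
    by (subst nn_integral_fubini_borel)
       (simp_all add: lam.sigma_finite_measure_axioms sets_lam matrix_transpose_mul)
  also have "\<dots> = (\<integral>\<^sup>+R. h (transpose R) \<partial>lam)"
    by (rule left) measurable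
  finally show ?thesis ..
qed

lemma nn_integral_gaussU_haar_O3_act_transpose:
  fixes f :: "real^3^3 \<Rightarrow> ('n::finite, 'd::finite) pt \<Rightarrow> ennreal"
  assumes H: "is_haar_O3 lam" and f [measurable]: "(\<lambda>(R, e). f R e) \<in> borel_measurable (borel \<Otimes>\<^sub>M borel)"
  shows "(\<integral>\<^sup>+e. \<integral>\<^sup>+R. f (transpose R) (act (transpose R) e) \<partial>lam \<partial>gaussU)
       = (\<integral>\<^sup>+e. \<integral>\<^sup>+R. f R e \<partial>lam \<partial>gaussU)"
proof -
  interpret lam: prob_space lam
    using H by (simp add: is_haar_O3_def)
  interpret gaussU: prob_space gaussU
    by (rule prob_space_gaussU)
  have sets_lam: "sets lam = sets borel"
    using H by (simp add: is_haar_O3_def)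
  have fubini: "(\<integral>\<^sup>+e. \<integral>\<^sup>+R. g R e \<partial>lam \<partial>gaussU) = (\<integral>\<^sup>+R. \<integral>\<^sup>+e. g R e \<partial>gaussU \<partial>lam)"
    if "(\<lambda>(e, R). g R e) \<in> borel_measurable (borel \<Otimes>\<^sub>M borel)"
    for g :: "real^3^3 \<Rightarrow> ('n, 'd) pt \<Rightarrow> ennreal"
    using that
    by (intro nn_integral_fubini_borel)
       (simp_all add: lam.sigma_finite_measure_axioms gaussU.sigma_finite_measure_axioms sets_lam
         sets_gaussU)
  have "(\<integral>\<^sup>+e. \<integral>\<^sup>+R. f (transpose R) (act (transpose R) e) \<partial>lam \<partial>gaussU)
      = (\<integral>\<^sup>+R. \<integral>\<^sup>+e. f (transpose R) (act (transpose R) e) \<partial>gaussU \<partial>lam)"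
    by (rule fubini) measurable
  also have "\<dots> = (\<integral>\<^sup>+R. \<integral>\<^sup>+e. f (transpose R) e \<partial>gaussU \<partial>lam)"
    using AE_haar_O3[OF H]
  proof (intro nn_integral_cong_AE, eventually_elim)
    case (elim R)
    have "(\<integral>\<^sup>+e. f (transpose R) (act (transpose R) e) \<partial>gaussU)
        = (\<integral>\<^sup>+e. f (transpose R) e \<partial>distr gaussU borel (act (transpose R)))"
      by (rule nn_integral_distr[symmetric]) measurable
    then show ?case
      by (simp add: gaussU_distr_act O3_transpose elim)
  qed
  also have "\<dots> = (\<integral>\<^sup>+R. \<integral>\<^sup>+e. f R e \<partial>gaussU \<partial>lam)"
    by (rule nn_integral_haar_O3_transpose[OF H]) measurable
  also have "\<dots> = (\<integral>\<^sup>+e. \<integral>\<^sup>+R. f R e \<partial>lam \<partial>gaussU)"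
    by (rule fubini[symmetric]) measurable
  finally show ?thesis .
qed

lemma loss_t_integrand_eq_loss_aug_integrand:
  fixes z0 :: "('n::finite, 'd::finite) pt"
    and epsth :: "('n, 'd) pt \<Rightarrow> ('n, 'd) pt"
  assumes H: "is_haar_O3 lam" and [measurable]: "epsth \<in> borel_measurable borel"
    and gam: "\<forall>z\<in>Uspace. gam z = lam" and z0: "z0 \<in> Uspace"
  shows "(\<integral>\<^sup>+ e. (let zt = a *\<^sub>R z0 + s *\<^sub>R e in
        \<integral>\<^sup>+ R. ennreal (1/2 * w * (norm (e - act R (epsth (act (transpose R) zt))))\<^sup>2) \<partial>gam zt) \<partial>gaussU)
     = (\<integral>\<^sup>+ e. \<integral>\<^sup>+ R. ennreal (1/2 * w * (norm (e - epsth (a *\<^sub>R act R z0 + s *\<^sub>R e)))\<^sup>2) \<partial>lam \<partial>gaussU)"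
    (is "?L = (\<integral>\<^sup>+ e. \<integral>\<^sup>+ R. ?G R e \<partial>lam \<partial>gaussU)")
proof -
  have "?L = (\<integral>\<^sup>+e. \<integral>\<^sup>+R. ?G (transpose R) (act (transpose R) e) \<partial>lam \<partial>gaussU)"
  proof (intro nn_integral_cong_AE, use AE_gaussU_Uspace in eventually_elim)
    case (elim e)
    have "a *\<^sub>R z0 + s *\<^sub>R e \<in> Uspace"
      by (intro subspace_add subspace_scale subspace_Uspace z0 elim)
    then have "gam (a *\<^sub>R z0 + s *\<^sub>R e) = lam"
      using gam by simp
    moreover have "AE R in lam.
        ennreal (1/2 * w * (norm (e - act R (epsth (act (transpose R) (a *\<^sub>R z0 + s *\<^sub>R e)))))\<^sup>2)
        = ?G (transpose R) (act (transpose R) e)"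
      using AE_haar_O3[OF H]
      by eventually_elim (simp add: norm_diff_act linear_add[OF linear_act] linear_scale[OF linear_act])
    ultimately show ?case
      by (simp add: nn_integral_cong_AE)
  qed
  also have "\<dots> = (\<integral>\<^sup>+ e. \<integral>\<^sup>+ R. ?G R e \<partial>lam \<partial>gaussU)"
    by (rule nn_integral_gaussU_haar_O3_act_transpose[OF H]) measurable
  finally show ?thesis .
qed

theorem proposition2:
  fixes q :: "('n::finite, 'd::finite) pt measure"
    and epsth :: "('n, 'd) pt \<Rightarrow> ('n, 'd) pt"
    and gam :: "('n, 'd) pt \<Rightarrow> (real^3^3) measure"
    and lam :: "(real^3^3) measure"
    and a s w :: real
  assumes "is_haar_O3 lam"
    and "prob_space q" and "sets q = sets borel" and "emeasure q Uspace = 1"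
    and "a > 0" and "s > 0" and "w \<ge> 0"
    and "epsth \<in> borel_measurable borel" and "\<forall>z\<in>Uspace. epsth z \<in> Uspace"
    and "gam \<in> borel \<rightarrow>\<^sub>M subprob_algebra borel"
    and "\<forall>z. prob_space (gam z)"
    and "\<forall>z\<in>Uspace. gam z = lam"
  shows "loss_t q a s w epsth gam = loss_aug q a s w epsth lam"
proof -
  have AE_Uspace: "AE z0 in q. z0 \<in> Uspace"
    using assms(2,4) by (simp add: prob_space.AE_prob_1 measure_def)
  show ?thesis
    unfolding loss_t_def loss_aug_def
    by (intro nn_integral_cong_AE)
       (use AE_Uspace in eventually_elim, erule loss_t_integrand_eq_loss_aug_integrand[OF assms(1,8,12)])
qed

end
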